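(* Let $f:\mathbb{R}^d\to\mathbb{R}$ be Lipschitz continuous and SISTr, and let $\ell\in\mathbb{R}$. Then for each $x\in\mathbb{R}^d$ there is a unique $c_x\in\mathbb{R}$ with $f(x+c_x\mathbf{1})=\ell$, and the map $x\mapsto c_x$ is continuous.
   Context: $\mathbf{1}$ is the all-ones vector in $\mathbb{R}^d$. A function $g:\mathbb{R}^d\to\mathbb{R}$ is SISTr (strictly increasing under scalar translation) if, for every $x\in\mathbb{R}^d$, the map $c\in\mathbb{R}\mapsto g(x+c\mathbf{1})$ is strictly increasing and maps $\mathbb{R}$ onto $\mathbb{R}$. *)

theory Defs
  imports "HOL-Analysis.Analysis"
begin

definition ones :: "real ^ 'n" where
  "ones = (\<chi> i. 1)"

definition SISTr :: "(real ^ 'n \<Rightarrow> real) \<Rightarrow> bool" where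
  "SISTr g \<longleftrightarrow> (\<forall>x. strict_mono (\<lambda>c::real. g (x + c *\<^sub>R ones))
                      \<and> surj (\<lambda>c::real. g (x + c *\<^sub>R ones)))"

end

theory Submission
  imports Defs
begin

text \<open>Since \<open>f\<close> is strictly increasing along \<open>\<one>\<close>, the root \<open>c\<^sub>x\<close> lies strictly between
  \<open>a\<close> and \<open>b\<close> exactly when \<open>f (x + a\<one>) < l < f (x + b\<one>)\<close>. For \<open>a < c\<^sub>x\<^sub>0 < b\<close> these two
  strict inequalities hold at \<open>x\<^sub>0\<close>, and by continuity of \<open>f\<close> (Lipschitz continuity is more
  than needed) they persist for \<open>x\<close> near \<open>x\<^sub>0\<close>.\<close>

lemma ex1_eq_if_strict_mono_surj:
  fixes h :: "'a::linorder \<Rightarrow> 'b::linorder"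
  assumes "strict_mono h" and "surj h"
  shows "\<exists>!c. h c = y"
  by (metis assms strict_mono_eq surjD)

lemma continuous_on_strict_mono_root:
  fixes g :: "'a::topological_space \<Rightarrow> 'b::linorder_topology \<Rightarrow> 'c::linorder_topology"
  assumes cont: "\<And>c. continuous_on S (\<lambda>x. g x c)"
    and mono: "\<And>x. x \<in> S \<Longrightarrow> strict_mono (g x)"
    and root: "\<And>x. x \<in> S \<Longrightarrow> g x (r x) = l"
  shows "continuous_on S r"
  unfolding continuous_on_def
proof
  fix x0 assume "x0 \<in> S"
  have near: "\<forall>\<^sub>F x in at x0 within S. x \<in> S"
    by (simp add: eventually_at_filter)
  have tendsto_g: "((\<lambda>x. g x c) \<longlongrightarrow> g x0 c) (at x0 within S)" for c
    using cont \<open>x0 \<in> S\<close> by (simp add: continuous_on_def)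
  show "(r \<longlongrightarrow> r x0) (at x0 within S)"
  proof (rule order_tendstoI)
    fix a assume "a < r x0"
    then have "g x0 a < l"
      using mono[OF \<open>x0 \<in> S\<close>] root[OF \<open>x0 \<in> S\<close>] by (metis strict_mono_less)
    then have "\<forall>\<^sub>F x in at x0 within S. g x a < l"
      by (rule order_tendstoD(2)[OF tendsto_g])
    with near show "\<forall>\<^sub>F x in at x0 within S. a < r x"
      by eventually_elim (metis mono root strict_mono_less)
  next
    fix b assume "r x0 < b"
    then have "l < g x0 b"
      using mono[OF \<open>x0 \<in> S\<close>] root[OF \<open>x0 \<in> S\<close>] by (metis strict_mono_less)
    then have "\<forall>\<^sub>F x in at x0 within S. l < g x b"
      by (rule order_tendstoD(1)[OF tendsto_g])
    with near show "\<forall>\<^sub>F x in at x0 within S. r x < b"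
      by eventually_elim (metis mono root strict_mono_less)
  qed
qed

theorem lemma3p2:
  fixes f :: "real ^ 'n \<Rightarrow> real" and l :: real
  assumes "\<exists>L. L-lipschitz_on UNIV f"
    and "SISTr f"
  shows "(\<forall>x. \<exists>!c. f (x + c *\<^sub>R ones) = l)
         \<and> continuous_on UNIV (\<lambda>x. THE c. f (x + c *\<^sub>R ones) = l)"
proof -
  have mono: "strict_mono (\<lambda>c. f (x + c *\<^sub>R ones))"
    and onto: "surj (\<lambda>c. f (x + c *\<^sub>R ones))" for x
    using \<open>SISTr f\<close> unfolding SISTr_def by blast+
  have unique_root: "\<exists>!c. f (x + c *\<^sub>R ones) = l" for x
    using ex1_eq_if_strict_mono_surj[OF mono onto] .
  have "continuous_on UNIV f"
    using assms(1) lipschitz_on_continuous_on by blast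
  then have "continuous_on UNIV (\<lambda>x. f (x + c *\<^sub>R ones))" for c
    by (rule continuous_on_compose2[of UNIV f]) (auto intro: continuous_intros)
  moreover have "f (x + (THE c. f (x + c *\<^sub>R ones) = l) *\<^sub>R ones) = l" for x
    using theI'[OF unique_root] .
  ultimately have "continuous_on UNIV (\<lambda>x. THE c. f (x + c *\<^sub>R ones) = l)"
    by (rule continuous_on_strict_mono_root[OF _ mono])
  with unique_root show ?thesis
    by blast
qed

end
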